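(* Let $\mathbf{Z}=\{Z_{\mathbf{u}}\}_{\mathbf{u}\in\mathbb{R}^2}$ be a max-stable random field, let $\mathbf{x}=\{\mathbf{x}_1,\ldots,\mathbf{x}_k\}$ and $\mathbf{y}=\{\mathbf{y}_1,\ldots,\mathbf{y}_s\}$ be disjoint sets of locations in $\mathbb{R}^2$, and let $F_{\mathbf{x}_i}$, $F_{\mathbf{y}_j}$ denote the marginal distribution functions of $Z_{\mathbf{x}_i}$, $Z_{\mathbf{y}_j}$. Let $(Z^{(t)}_{\mathbf{x}_1},\ldots,Z^{(t)}_{\mathbf{x}_k},Z^{(t)}_{\mathbf{y}_1},\ldots,Z^{(t)}_{\mathbf{y}_s})$, $t=1,\ldots,T$, be independent replications of $(Z_{\mathbf{x}_1},\ldots,Z_{\mathbf{x}_k},Z_{\mathbf{y}_1},\ldots,Z_{\mathbf{y}_s})$, and let $\widehat{F}_{\mathbf{w}}(u)=\frac1T\sum_{t=1}^T\mathbf{1}_{\{Z^{(t)}_{\mathbf{w}}\le u\}}$ be the empirical distribution function at location $\mathbf{w}$. For $\alpha,\beta>0$ define $$\widehat{\widehat{\nu}}^{\alpha,\beta}(\mathbf{x},\mathbf{y})=\frac{1}{2T}\sum_{t=1}^T\left|\bigvee_{i=1}^k\widehat{F}^{\alpha}_{\mathbf{x}_i}\big(Z^{(t)}_{\mathbf{x}_i}\big)-\bigvee_{j=1}^s\widehat{F}^{\beta}_{\mathbf{y}_j}\big(Z^{(t)}_{\mathbf{y}_j}\big)\right|.$$ Then, as $T\to\infty$, $$\widehat{\widehat{\nu}}^{\alpha,\beta}(\mathbf{x},\mathbf{y})\to\frac12E\left|\bigvee_{i=1}^kF^{\alpha}_{\mathbf{x}_i}(Z_{\mathbf{x}_i})-\bigvee_{j=1}^sF^{\beta}_{\mathbf{y}_j}(Z_{\mathbf{y}_j})\right|\quad\text{almost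 surely}.$$
   Context: The limit equals the generalized madogram $\nu^{\alpha,\beta}(\mathbf{x},\mathbf{y})=\tfrac12E|F^{\alpha}(M(\mathbf{x}))-F^{\beta}(M(\mathbf{y}))|$ of the field transformed to unit Fréchet margins $F(z)=\exp(-z^{-1})$, where $M(\mathbf{x})$, $M(\mathbf{y})$ are the maxima over the regions. *)

theory Defs
  imports "HOL-Probability.Probability"
begin

text \<open>Max-stable random field (indexed by locations of type 'l), defined through finite-dimensional
  distribution functions: for each n \<ge> 1 there are normings a_n > 0, b_n such that the normalised
  pointwise maximum of n independent copies has the same finite-dimensional distributions as the field,
  i.e. P(Z_u \<le> a_n(u) z_u + b_n(u) for all u in U)^n = P(Z_u \<le> z_u for all u in U).\<close>
definition max_stable :: "'a measure \<Rightarrow> ('a \<Rightarrow> 'l \<Rightarrow> real) \<Rightarrow> bool" where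
  "max_stable M Z \<longleftrightarrow>
     (\<forall>u. (\<lambda>\<omega>. Z \<omega> u) \<in> borel_measurable M) \<and>
     (\<forall>u. \<not> (\<exists>c. AE \<omega> in M. Z \<omega> u = c)) \<and>
     (\<forall>n::nat. n \<ge> 1 \<longrightarrow> (\<exists>a b :: 'l \<Rightarrow> real. (\<forall>u. a u > 0) \<and>
        (\<forall>U z. finite U \<longrightarrow>
           measure M {\<omega> \<in> space M. \<forall>u\<in>U. Z \<omega> u \<le> a u * z u + b u} ^ n
           = measure M {\<omega> \<in> space M. \<forall>u\<in>U. Z \<omega> u \<le> z u})))"

definition marg_cdf :: "'a measure \<Rightarrow> ('a \<Rightarrow> 'l \<Rightarrow> real) \<Rightarrow> 'l \<Rightarrow> real \<Rightarrow> real" where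
  "marg_cdf M Z w u = measure M {\<omega> \<in> space M. Z \<omega> w \<le> u}"

definition emp_cdf :: "(nat \<Rightarrow> 'a \<Rightarrow> 'l \<Rightarrow> real) \<Rightarrow> nat \<Rightarrow> 'l \<Rightarrow> 'a \<Rightarrow> real \<Rightarrow> real" where
  "emp_cdf Zr T w \<omega> u = (1 / real T) * (\<Sum>t\<in>{1..T}. if Zr t \<omega> w \<le> u then 1 else 0)"

definition madogram_est ::
  "(nat \<Rightarrow> 'a \<Rightarrow> 'l \<Rightarrow> real) \<Rightarrow> real \<Rightarrow> real \<Rightarrow> 'l set \<Rightarrow> 'l set \<Rightarrow> nat \<Rightarrow> 'a \<Rightarrow> real" where
  "madogram_est Zr \<alpha> \<beta> X Y T \<omega> =
     (1 / (2 * real T)) * (\<Sum>t\<in>{1..T}.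
        \<bar>(MAX i\<in>X. emp_cdf Zr T i \<omega> (Zr t \<omega> i) powr \<alpha>)
         - (MAX j\<in>Y. emp_cdf Zr T j \<omega> (Zr t \<omega> j) powr \<beta>)\<bar>)"

end

theory Submission
  imports Defs
begin

text \<open>By the strong law of large numbers the empirical distribution functions converge almost
  surely at countably many quantiles of each margin, and monotonicity upgrades this to uniform
  convergence (Glivenko--Cantelli). Since \<open>x \<mapsto> x powr \<alpha>\<close> is uniformly continuous on \<open>[0, 1]\<close>,
  replacing the empirical margins by the true ones changes every summand of the estimator by a
  uniformly small amount, and the resulting average of i.i.d. \<open>[0, 1]\<close>-valued variables
  converges almost surely to its expectation, again by the strong law.\<close>

section \<open>Strong law of large numbers for \<open>[0, 1]\<close>-valued variables\<close>

lemma AE_tendsto_if_AE_eventually_dist_less: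
  fixes f :: "nat \<Rightarrow> 'a \<Rightarrow> 'b::metric_space"
  assumes "\<And>e. e > 0 \<Longrightarrow> AE \<omega> in M. eventually (\<lambda>n. dist (f n \<omega>) (l \<omega>) < e) sequentially"
  shows "AE \<omega> in M. (\<lambda>n. f n \<omega>) \<longlonglongrightarrow> l \<omega>"
proof -
  have "AE \<omega> in M. \<forall>k::nat. eventually (\<lambda>n. dist (f n \<omega>) (l \<omega>) < 1 / Suc k) sequentially"
    using assms by (subst AE_all_countable) auto
  then show ?thesis
  proof (rule AE_mp, intro AE_I2 impI tendstoI)
    fix \<omega> and e :: real
    assume ev: "\<forall>k::nat. eventually (\<lambda>n. dist (f n \<omega>) (l \<omega>) < 1 / Suc k) sequentially"
      and "e > 0"
    then obtain k :: nat where k: "1 / Suc k < e"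
      by (metis nat_approx_posE)
    show "eventually (\<lambda>n. dist (f n \<omega>) (l \<omega>) < e) sequentially"
      using ev[rule_format, of k] by (rule eventually_mono) (use k in linarith)
  qed
qed

lemma (in prob_space) Hoeffding_sum_deviation_le:
  fixes X :: "nat \<Rightarrow> 'a \<Rightarrow> real"
  assumes indep: "indep_vars (\<lambda>_. borel) X {1..}"
    and bounded: "\<And>t \<omega>. t \<ge> 1 \<Longrightarrow> \<omega> \<in> space M \<Longrightarrow> X t \<omega> \<in> {0..1}"
    and mean: "\<And>t. t \<ge> 1 \<Longrightarrow> expectation (X t) = \<mu>"
    and "T \<ge> 1" "e \<ge> 0"
  shows "prob {\<omega> \<in> space M. real T * e \<le> \<bar>(\<Sum>t\<in>{1..T}. X t \<omega>) - real T * \<mu>\<bar>}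
           \<le> 2 * exp (-2 * e\<^sup>2) ^ T"
proof -
  interpret Hoeffding_ineq M "{1..T}" X "\<lambda>_. 0" "\<lambda>_. 1" "\<Sum>t\<in>{1..T}. expectation (X t)"
  proof unfold_locales
    show "indep_vars (\<lambda>_. borel) X {1..T}"
      by (rule indep_vars_subset[OF indep]) auto
    show "AE \<omega> in M. X t \<omega> \<in> {0..1}" if "t \<in> {1..T}" for t
      using bounded that by (intro AE_I2) auto
  qed auto
  have "(\<Sum>t\<in>{1..T}. expectation (X t)) = real T * \<mu>"
    using mean by simp
  then have "prob {\<omega> \<in> space M. real T * e \<le> \<bar>(\<Sum>t\<in>{1..T}. X t \<omega>) - real T * \<mu>\<bar>}
      \<le> 2 * exp (- 2 * (real T * e)\<^sup>2 / (\<Sum>t\<in>{1..T}. (1 - 0)\<^sup>2))"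
    using Hoeffding_ineq_abs_ge[of "real T * e"] assms(4,5) by auto
  also have "\<dots> = 2 * exp (-2 * e\<^sup>2) ^ T"
    using \<open>T \<ge> 1\<close> by (simp add: power2_eq_square exp_of_nat_mult[symmetric] field_simps)
  finally show ?thesis .
qed

text \<open>The deviation probabilities are summable, so Borel--Cantelli applies.\<close>

lemma (in prob_space) AE_eventually_mean_dist_less:
  fixes X :: "nat \<Rightarrow> 'a \<Rightarrow> real"
  assumes indep: "indep_vars (\<lambda>_. borel) X {1..}"
    and "\<And>t \<omega>. t \<ge> 1 \<Longrightarrow> \<omega> \<in> space M \<Longrightarrow> X t \<omega> \<in> {0..1}"
    and "\<And>t. t \<ge> 1 \<Longrightarrow> expectation (X t) = \<mu>"
    and "e > 0"
  shows "AE \<omega> in M. eventually (\<lambda>T. dist ((\<Sum>t\<in>{1..T}. X t \<omega>) / real T) \<mu> < e) sequentially"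
proof -
  define A where "A T = {\<omega> \<in> space M. real T * e \<le> \<bar>(\<Sum>t\<in>{1..T}. X t \<omega>) - real T * \<mu>\<bar>}" for T
  have "(\<lambda>\<omega>. \<Sum>t\<in>{1..T}. X t \<omega>) \<in> borel_measurable M" for T
    using indep by (intro borel_measurable_sum) (auto simp: indep_vars_def)
  then have A_sets [measurable]: "A T \<in> sets M" for T
    unfolding A_def by measurable
  have A_bound: "measure M (A T) \<le> 2 * exp (-2 * e\<^sup>2) ^ T" if "T \<ge> 1" for T
    unfolding A_def using Hoeffding_sum_deviation_le[OF assms(1-3) that] \<open>e > 0\<close> by simp
  have "summable (\<lambda>T. measure M (A T))"
  proof (rule summable_comparison_test')
    show "summable (\<lambda>T. 2 * exp (-2 * e\<^sup>2) ^ T)"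
      using \<open>e > 0\<close> by (intro summable_mult summable_geometric) auto
  qed (use A_bound in simp)
  then have "AE \<omega> in M. eventually (\<lambda>T. \<omega> \<in> space M - A T) sequentially"
    by (intro borel_cantelli_AE1) (auto simp: less_top[symmetric] emeasure_finite)
  then show ?thesis
  proof (rule AE_mp, intro AE_I2 impI)
    fix \<omega> assume "\<omega> \<in> space M" and "eventually (\<lambda>T. \<omega> \<in> space M - A T) sequentially"
    then have "eventually (\<lambda>T. T \<ge> 1 \<and> \<omega> \<in> space M - A T) sequentially"
      by (simp add: eventually_conj_iff eventually_ge_at_top)
    then show "eventually (\<lambda>T. dist ((\<Sum>t\<in>{1..T}. X t \<omega>) / real T) \<mu> < e) sequentially"
    proof (rule eventually_mono)
      fix T assume T: "T \<ge> 1 \<and> \<omega> \<in> space M - A T"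
      then have "\<bar>(\<Sum>t\<in>{1..T}. X t \<omega>) - real T * \<mu>\<bar> < real T * e"
        unfolding A_def using \<open>\<omega> \<in> space M\<close> by auto
      moreover have "(\<Sum>t\<in>{1..T}. X t \<omega>) / real T - \<mu> = ((\<Sum>t\<in>{1..T}. X t \<omega>) - real T * \<mu>) / real T"
        using T by (simp add: field_simps)
      ultimately show "dist ((\<Sum>t\<in>{1..T}. X t \<omega>) / real T) \<mu> < e"
        using T by (simp add: dist_real_def abs_div pos_divide_less_eq mult.commute)
    qed
  qed
qed

lemma (in prob_space) strong_law_unit_interval:
  fixes X :: "nat \<Rightarrow> 'a \<Rightarrow> real"
  assumes "indep_vars (\<lambda>_. borel) X {1..}"
    and "\<And>t \<omega>. t \<ge> 1 \<Longrightarrow> \<omega> \<in> space M \<Longrightarrow> X t \<omega> \<in> {0..1}"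
    and "\<And>t. t \<ge> 1 \<Longrightarrow> expectation (X t) = \<mu>"
  shows "AE \<omega> in M. (\<lambda>T. (\<Sum>t\<in>{1..T}. X t \<omega>) / real T) \<longlonglongrightarrow> \<mu>"
  by (rule AE_tendsto_if_AE_eventually_dist_less) (rule AE_eventually_mean_dist_less[OF assms])

section \<open>Glivenko--Cantelli\<close>

definition quantile :: "real measure \<Rightarrow> real \<Rightarrow> real" where
  "quantile N p = Inf {u. p \<le> cdf N u}"

context real_distribution
begin

lemma
  assumes "0 < p" and "p < 1"
  shows cdf_quantile_ge: "p \<le> cdf M (quantile M p)"
    and cdf_less_quantile: "\<And>u. u < quantile M p \<Longrightarrow> cdf M u < p"
    and measure_lessThan_quantile_le: "measure M {..<quantile M p} \<le> p"
proof -
  define U where "U = {u. p \<le> cdf M u}"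
  have "eventually (\<lambda>u. p < cdf M u) at_top"
    using order_tendstoD(1)[OF cdf_lim_at_top_prob \<open>p < 1\<close>] .
  then have U_nonempty: "U \<noteq> {}"
    unfolding U_def by (auto simp: eventually_at_top_linorder dest: less_imp_le)
  have "eventually (\<lambda>u. cdf M u < p) at_bot"
    using order_tendstoD(2)[OF cdf_lim_at_bot \<open>0 < p\<close>] .
  then obtain b where "\<And>u. u \<le> b \<Longrightarrow> cdf M u < p"
    by (auto simp: eventually_at_bot_linorder)
  then have U_bdd: "bdd_below U"
    unfolding U_def by (intro bdd_belowI[of _ b]) (metis mem_Collect_eq not_le order_less_imp_le)
  show less: "cdf M u < p" if "u < quantile M p" for u
  proof (rule ccontr)
    assume "\<not> cdf M u < p"
    then have "quantile M p \<le> u"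
      unfolding quantile_def using cInf_lower[OF _ U_bdd] by (simp add: U_def)
    with that show False by simp
  qed
  show "p \<le> cdf M (quantile M p)"
  proof (rule tendsto_lowerbound)
    show "(cdf M \<longlongrightarrow> cdf M (quantile M p)) (at_right (quantile M p))"
      using cdf_is_right_cont by (simp add: continuous_within)
    show "\<forall>\<^sub>F x in at_right (quantile M p). p \<le> cdf M x"
      using eventually_at_right_less
    proof (rule eventually_mono)
      fix x assume "quantile M p < x"
      then obtain s where "s \<in> U" "s < x"
        using cInf_less_iff[OF U_nonempty U_bdd] unfolding quantile_def U_def by auto
      then show "p \<le> cdf M x"
        using cdf_nondecreasing[of s x] unfolding U_def by auto
    qed
  qed simp
  show "measure M {..<quantile M p} \<le> p"
  proof (rule tendsto_upperbound)
    show "\<forall>\<^sub>F x in at_left (quantile M p). cdf M x \<le> p"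
      by (rule eventually_mono[of "\<lambda>x. x < quantile M p"])
        (auto simp: eventually_at_filter dest: less)
  qed (simp_all add: cdf_at_left)
qed

end

lemma obtain_grid_cell:
  fixes q :: "nat \<Rightarrow> real" and u :: real
  assumes "0 < m"
  obtains j where "j < m" and "0 < j \<Longrightarrow> q j \<le> u" and "j + 1 < m \<Longrightarrow> u < q (j + 1)"
proof (cases "\<exists>k\<in>{0<..<m}. q k \<le> u")
  case False
  then show ?thesis
    using that[of 0] \<open>0 < m\<close> by force
next
  case True
  define J where "J = {k\<in>{0<..<m}. q k \<le> u}"
  have "finite J" "J \<noteq> {}"
    using True unfolding J_def by auto
  then have "Max J \<in> J" and Max_ge: "\<And>k. k \<in> J \<Longrightarrow> k \<le> Max J"
    by simp_all
  moreover have "u < q (Max J + 1)" if "Max J + 1 < m"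
  proof (rule ccontr)
    assume "\<not> u < q (Max J + 1)"
    with that have "Max J + 1 \<in> J"
      by (simp add: J_def)
    with Max_ge show False
      by fastforce
  qed
  ultimately show ?thesis
    by (intro that[of "Max J"]) (auto simp: J_def)
qed

text \<open>Here \<open>q j\<close> is the \<open>j/m\<close>-quantile of \<open>F\<close> and \<open>Gh\<close> plays the role of the left limits
  of \<open>Fh\<close>.\<close>

lemma approx_from_quantile_grid:
  fixes F Fh Gh :: "real \<Rightarrow> real" and q :: "nat \<Rightarrow> real"
  assumes "0 < m"
    and F_mono: "mono F" and F_range: "\<And>x. F x \<in> {0..1}"
    and Fh_mono: "mono Fh" and Fh_range: "\<And>x. Fh x \<in> {0..1}"
    and Fh_Gh: "\<And>x y. x < y \<Longrightarrow> Fh x \<le> Gh y"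
    and F_at_q: "\<And>j. 0 < j \<Longrightarrow> j < m \<Longrightarrow> real j / m \<le> F (q j)"
    and F_below_q: "\<And>j x. 0 < j \<Longrightarrow> j < m \<Longrightarrow> x < q j \<Longrightarrow> F x < real j / m"
    and Fh_at_q: "\<And>j. 0 < j \<Longrightarrow> j < m \<Longrightarrow> real j / m \<le> Fh (q j) + 1 / m"
    and Gh_at_q: "\<And>j. 0 < j \<Longrightarrow> j < m \<Longrightarrow> Gh (q j) \<le> real j / m + 1 / m"
  shows "\<bar>Fh u - F u\<bar> \<le> 2 / real m"
proof -
  obtain j where j: "j < m" "0 < j \<Longrightarrow> q j \<le> u" "j + 1 < m \<Longrightarrow> u < q (j + 1)"
    using obtain_grid_cell[OF \<open>0 < m\<close>] by metis
  have last_cell: "real j / m + 1 / m = 1" if "\<not> j + 1 < m"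
    using j(1) that \<open>0 < m\<close> by (simp add: add_divide_distrib[symmetric])
  have "real j / m \<le> F u"
  proof (cases "0 < j")
    case True
    then show ?thesis
      using F_at_q[OF True j(1)] monoD[OF F_mono j(2)] by linarith
  qed (use F_range[of u] in simp)
  moreover have "F u \<le> real j / m + 1 / m"
  proof (cases "j + 1 < m")
    case True
    then show ?thesis
      using F_below_q[of "j + 1" u] j(3) by (simp add: add_divide_distrib)
  qed (use F_range[of u] last_cell in simp)
  moreover have "real j / m \<le> Fh u + 1 / m"
  proof (cases "0 < j")
    case True
    then show ?thesis
      using Fh_at_q[OF True j(1)] monoD[OF Fh_mono j(2)] by linarith
  qed (use Fh_range[of u] in simp)
  moreover have "Fh u \<le> real j / m + 2 / m"
  proof (cases "j + 1 < m")
    case True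
    then have "Fh u \<le> real (j + 1) / m + 1 / m"
      using Fh_Gh[OF j(3)] Gh_at_q[of "j + 1"] by fastforce
    then show ?thesis
      by (simp add: add_divide_distrib)
  next
    case False
    have "1 / real m \<le> 2 / real m"
      by (simp add: divide_right_mono)
    then show ?thesis
      using Fh_range[of u] last_cell[OF False] by simp
  qed
  ultimately show ?thesis
    by linarith
qed

lemma (in real_distribution) cdf_approx_from_quantiles:
  fixes Fh Gh :: "real \<Rightarrow> real"
  assumes "0 < m" and "mono Fh" and "\<And>x. Fh x \<in> {0..1}" and "\<And>x y. x < y \<Longrightarrow> Fh x \<le> Gh y"
    and close: "\<And>j. 0 < j \<Longrightarrow> j < m \<Longrightarrow>
      \<bar>Fh (quantile M (real j / m)) - cdf M (quantile M (real j / m))\<bar> < 1 / m \<and>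
      \<bar>Gh (quantile M (real j / m)) - measure M {..<quantile M (real j / m)}\<bar> < 1 / m"
  shows "\<bar>Fh u - cdf M u\<bar> \<le> 2 / real m"
proof (rule approx_from_quantile_grid[where F = "cdf M" and q = "\<lambda>j. quantile M (real j / m)"])
  have q_prob: "0 < real j / m" "real j / m < 1" if "0 < j" "j < m" for j
    using that by (auto simp: field_simps)
  show "real j / m \<le> cdf M (quantile M (real j / m))" if "0 < j" "j < m" for j
    by (rule cdf_quantile_ge[OF q_prob[OF that]])
  show "cdf M x < real j / m" if "0 < j" "j < m" "x < quantile M (real j / m)" for j x
    using cdf_less_quantile[OF q_prob[OF that(1,2)] that(3)] .
  show "real j / m \<le> Fh (quantile M (real j / m)) + 1 / m" if "0 < j" "j < m" for j
    using close[OF that] cdf_quantile_ge[OF q_prob[OF that]] by linarith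
  show "Gh (quantile M (real j / m)) \<le> real j / m + 1 / m" if "0 < j" "j < m" for j
    using close[OF that] measure_lessThan_quantile_le[OF q_prob[OF that]] by linarith
  show "mono (cdf M)"
    by (simp add: mono_def cdf_nondecreasing)
  show "cdf M x \<in> {0..1}" for x
    using cdf_nonneg cdf_bounded_prob by simp
qed (use assms(1-4) in simp_all)

lemma (in real_distribution) uniform_convergence_to_cdf:
  fixes Fh Gh :: "nat \<Rightarrow> real \<Rightarrow> real"
  assumes Fh_mono: "\<And>T. mono (Fh T)" and Fh_range: "\<And>T x. Fh T x \<in> {0..1}"
    and Fh_Gh: "\<And>T x y. x < y \<Longrightarrow> Fh T x \<le> Gh T y"
    and Fh_tendsto: "\<And>m j.
      (\<lambda>T. Fh T (quantile M (real j / real m))) \<longlonglongrightarrow> cdf M (quantile M (real j / real m))"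
    and Gh_tendsto: "\<And>m j.
      (\<lambda>T. Gh T (quantile M (real j / real m))) \<longlonglongrightarrow> measure M {..<quantile M (real j / real m)}"
    and "e > 0"
  shows "eventually (\<lambda>T. \<forall>u. \<bar>Fh T u - cdf M u\<bar> \<le> e) sequentially"
proof -
  obtain m :: nat where m: "2 / e < m"
    using reals_Archimedean2 by blast
  then have "0 < m"
    using \<open>e > 0\<close> by (metis divide_pos_pos of_nat_0_less_iff order.strict_trans zero_less_numeral)
  with m \<open>e > 0\<close> have m_e: "2 / real m \<le> e"
    by (simp add: field_simps)
  define q where "q j = quantile M (real j / real m)" for j :: nat
  have "eventually (\<lambda>T. \<bar>Fh T (q j) - cdf M (q j)\<bar> < 1 / m) sequentially" for j
    using tendstoD[OF Fh_tendsto, of "1 / m"] \<open>0 < m\<close> by (simp add: q_def dist_real_def)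
  moreover have "eventually (\<lambda>T. \<bar>Gh T (q j) - measure M {..<q j}\<bar> < 1 / m) sequentially" for j
    using tendstoD[OF Gh_tendsto, of "1 / m"] \<open>0 < m\<close> by (simp add: q_def dist_real_def)
  ultimately have "eventually (\<lambda>T. \<forall>j\<in>{0<..<m}. \<bar>Fh T (q j) - cdf M (q j)\<bar> < 1 / m
      \<and> \<bar>Gh T (q j) - measure M {..<q j}\<bar> < 1 / m) sequentially"
    by (intro eventually_ball_finite ballI eventually_conj) auto
  then show ?thesis
  proof (rule eventually_mono, intro allI)
    fix T u
    assume "\<forall>j\<in>{0<..<m}. \<bar>Fh T (q j) - cdf M (q j)\<bar> < 1 / m
      \<and> \<bar>Gh T (q j) - measure M {..<q j}\<bar> < 1 / m"
    then have "\<bar>Fh T u - cdf M u\<bar> \<le> 2 / real m"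
      using \<open>0 < m\<close> Fh_mono Fh_range Fh_Gh unfolding q_def
      by (intro cdf_approx_from_quantiles[where Gh = "Gh T"]) auto
    with m_e show "\<bar>Fh T u - cdf M u\<bar> \<le> e"
      by linarith
  qed
qed

section \<open>The madogram estimator\<close>

lemma empirical_frequency_mem_unit_interval:
  "(\<Sum>t\<in>{1..T}. indicator B (x t)) / real T \<in> {0..1}"
proof -
  have "(\<Sum>t\<in>{1..T}. indicator B (x t)) \<le> real (card {1..T}) * 1"
    by (rule sum_bounded_above) simp
  then show ?thesis
    by (auto simp: divide_le_eq_1 sum_nonneg)
qed

lemma empirical_frequency_mono:
  assumes "B \<subseteq> C"
  shows "(\<Sum>t\<in>{1..T}. indicator B (x t)) / real T \<le> (\<Sum>t\<in>{1..T}. indicator C (x t)) / real T"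
  using assms by (intro divide_right_mono sum_mono) (auto simp: indicator_def)

lemma emp_cdf_eq_frequency:
  "emp_cdf Zr T w \<omega> u = (\<Sum>t\<in>{1..T}. indicator {..u} (Zr t \<omega> w)) / real T"
  unfolding emp_cdf_def indicator_def of_bool_def by simp

lemma emp_cdf_mem_unit_interval: "emp_cdf Zr T w \<omega> u \<in> {0..1}"
  unfolding emp_cdf_eq_frequency by (rule empirical_frequency_mem_unit_interval)

definition madogram_summand ::
  "('l \<Rightarrow> real \<Rightarrow> real) \<Rightarrow> real \<Rightarrow> real \<Rightarrow> 'l set \<Rightarrow> 'l set \<Rightarrow> ('l \<Rightarrow> real) \<Rightarrow> real" where
  "madogram_summand F \<alpha> \<beta> X Y z =
     \<bar>(MAX i\<in>X. F i (z i) powr \<alpha>) - (MAX j\<in>Y. F j (z j) powr \<beta>)\<bar>"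

lemma madogram_est_eq_mean:
  "madogram_est Zr \<alpha> \<beta> X Y T \<omega> =
     (1 / 2) * ((\<Sum>t\<in>{1..T}. madogram_summand (\<lambda>w. emp_cdf Zr T w \<omega>) \<alpha> \<beta> X Y (Zr t \<omega>)) / real T)"
  by (simp add: madogram_est_def madogram_summand_def)

lemma madogram_summand_restrict:
  assumes "X \<union> Y \<subseteq> S"
  shows "madogram_summand F \<alpha> \<beta> X Y (restrict z S) = madogram_summand F \<alpha> \<beta> X Y z"
proof -
  have "(\<lambda>i. F i (restrict z S i) powr a) ` A = (\<lambda>i. F i (z i) powr a) ` A" if "A \<subseteq> S" for A a
    using that by (auto intro!: image_cong)
  then show ?thesis
    using assms by (simp add: madogram_summand_def)
qed

lemma Max_powr_mem_unit_interval:
  fixes a :: "'l \<Rightarrow> real"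
  assumes "finite A" "A \<noteq> {}" "\<alpha> \<ge> 0" "\<And>i. i \<in> A \<Longrightarrow> a i \<in> {0..1}"
  shows "(MAX i\<in>A. a i powr \<alpha>) \<in> {0..1}"
proof -
  have "(MAX i\<in>A. a i powr \<alpha>) \<in> (\<lambda>i. a i powr \<alpha>) ` A"
    using assms(1,2) by (intro Max_in) auto
  moreover have "a i powr \<alpha> \<in> {0..1}" if "i \<in> A" for i
    using assms(3) assms(4)[OF that] powr_le1[of \<alpha> "a i"] by auto
  ultimately show ?thesis
    by auto
qed

lemma madogram_summand_mem_unit_interval:
  assumes "finite X" "X \<noteq> {}" "finite Y" "Y \<noteq> {}" "\<alpha> \<ge> 0" "\<beta> \<ge> 0"
    and "\<And>w u. F w u \<in> {0..1}"
  shows "madogram_summand F \<alpha> \<beta> X Y z \<in> {0..1}"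
  using Max_powr_mem_unit_interval[OF assms(1,2,5), of "\<lambda>i. F i (z i)"]
    Max_powr_mem_unit_interval[OF assms(3,4,6), of "\<lambda>i. F i (z i)"] assms(7)
  by (auto simp: madogram_summand_def)

lemma borel_measurable_madogram_summand:
  assumes "finite X" "finite Y" "X \<union> Y \<subseteq> S"
    and F_measurable: "\<And>w. w \<in> X \<union> Y \<Longrightarrow> F w \<in> borel_measurable borel"
  shows "madogram_summand F \<alpha> \<beta> X Y \<in> borel_measurable (PiM S (\<lambda>_. borel))"
proof -
  have component: "(\<lambda>z. F w (z w) powr a) \<in> borel_measurable (PiM S (\<lambda>_. borel))"
    if "w \<in> X \<union> Y" for w a
  proof -
    have "w \<in> S"
      using assms(3) that by blast
    show ?thesis
      using measurable_compose[OF measurable_component_singleton[OF \<open>w \<in> S\<close>] F_measurable[OF that]]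
      by (intro powr_real_measurable) auto
  qed
  show ?thesis
    unfolding madogram_summand_def
    using assms(1,2) component
    by (intro borel_measurable_abs borel_measurable_diff borel_measurable_Max) auto
qed

lemma abs_Max_diff_le:
  fixes a b :: "'l \<Rightarrow> real"
  assumes "finite A" "A \<noteq> {}" "\<And>i. i \<in> A \<Longrightarrow> \<bar>a i - b i\<bar> \<le> e"
  shows "\<bar>(MAX i\<in>A. a i) - (MAX i\<in>A. b i)\<bar> \<le> e"
proof -
  have "(MAX i\<in>A. a i) \<in> a ` A" "(MAX i\<in>A. b i) \<in> b ` A"
    using assms(1,2) by (intro Max_in; simp)+
  then obtain i k where i: "i \<in> A" "(MAX i\<in>A. a i) = a i" and k: "k \<in> A" "(MAX i\<in>A. b i) = b k"
    by auto
  have "b i \<le> (MAX i\<in>A. b i)" "a k \<le> (MAX i\<in>A. a i)"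
    using assms(1) i(1) k(1) by simp_all
  then show ?thesis
    using assms(3)[OF i(1)] assms(3)[OF k(1)] i(2) k(2) by linarith
qed

lemma powr_uniformly_continuous_on_unit_interval:
  fixes \<alpha> :: real
  assumes "\<alpha> > 0" "e > 0"
  obtains d where "d > 0"
    and "\<And>x y. x \<in> {0..1} \<Longrightarrow> y \<in> {0..1} \<Longrightarrow> \<bar>x - y\<bar> \<le> d \<Longrightarrow> \<bar>x powr \<alpha> - y powr \<alpha>\<bar> \<le> e"
proof -
  have "continuous_on {0..1::real} (\<lambda>x. x powr \<alpha>)"
    using assms(1) by (intro continuous_on_powr') (auto intro: continuous_intros)
  then have "uniformly_continuous_on {0..1::real} (\<lambda>x. x powr \<alpha>)"
    by (rule compact_uniformly_continuous) simp
  then obtain d where "d > 0"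
    and d: "\<forall>x\<in>{0..1}. \<forall>y\<in>{0..1}. dist y x < d \<longrightarrow> dist (y powr \<alpha>) (x powr \<alpha>) < e"
    using assms(2) unfolding uniformly_continuous_on_def by blast
  show ?thesis
  proof (rule that[of "d / 2"])
    show "\<bar>x powr \<alpha> - y powr \<alpha>\<bar> \<le> e" if "x \<in> {0..1}" "y \<in> {0..1}" "\<bar>x - y\<bar> \<le> d / 2" for x y
      using d that \<open>d > 0\<close> by (force simp: dist_real_def)
  qed (use \<open>d > 0\<close> in simp)
qed

lemma madogram_summand_uniformly_close:
  assumes X: "finite X" "X \<noteq> {}" and Y: "finite Y" "Y \<noteq> {}"
    and "\<alpha> > 0" "\<beta> > 0" "e > 0"
  shows "\<exists>d>0. \<forall>F G z. (\<forall>w\<in>X \<union> Y. F w (z w) \<in> {0..1} \<and> G w (z w) \<in> {0..1}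
                     \<and> \<bar>F w (z w) - G w (z w)\<bar> \<le> d)
           \<longrightarrow> \<bar>madogram_summand F \<alpha> \<beta> X Y z - madogram_summand G \<alpha> \<beta> X Y z\<bar> \<le> e"
proof -
  obtain d\<^sub>\<alpha> where "d\<^sub>\<alpha> > 0" and d\<^sub>\<alpha>: "\<And>x y. x \<in> {0..1} \<Longrightarrow> y \<in> {0..1} \<Longrightarrow> \<bar>x - y\<bar> \<le> d\<^sub>\<alpha>
      \<Longrightarrow> \<bar>x powr \<alpha> - y powr \<alpha>\<bar> \<le> e / 2"
    using powr_uniformly_continuous_on_unit_interval[of \<alpha> "e / 2"] assms by auto
  obtain d\<^sub>\<beta> where "d\<^sub>\<beta> > 0" and d\<^sub>\<beta>: "\<And>x y. x \<in> {0..1} \<Longrightarrow> y \<in> {0..1} \<Longrightarrow> \<bar>x - y\<bar> \<le> d\<^sub>\<beta>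
      \<Longrightarrow> \<bar>x powr \<beta> - y powr \<beta>\<bar> \<le> e / 2"
    using powr_uniformly_continuous_on_unit_interval[of \<beta> "e / 2"] assms by auto
  have bound: "\<bar>madogram_summand F \<alpha> \<beta> X Y z - madogram_summand G \<alpha> \<beta> X Y z\<bar> \<le> e"
    if close: "\<forall>w\<in>X \<union> Y. F w (z w) \<in> {0..1} \<and> G w (z w) \<in> {0..1}
                 \<and> \<bar>F w (z w) - G w (z w)\<bar> \<le> min d\<^sub>\<alpha> d\<^sub>\<beta>" for F G z
  proof -
    have "\<bar>(MAX i\<in>X. F i (z i) powr \<alpha>) - (MAX i\<in>X. G i (z i) powr \<alpha>)\<bar> \<le> e / 2"
      using X close by (intro abs_Max_diff_le d\<^sub>\<alpha>) auto
    moreover have "\<bar>(MAX j\<in>Y. F j (z j) powr \<beta>) - (MAX j\<in>Y. G j (z j) powr \<beta>)\<bar> \<le> e / 2"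
      using Y close by (intro abs_Max_diff_le d\<^sub>\<beta>) auto
    ultimately show ?thesis
      unfolding madogram_summand_def by linarith
  qed
  show ?thesis
  proof (intro exI[of _ "min d\<^sub>\<alpha> d\<^sub>\<beta>"] conjI allI impI)
    show "min d\<^sub>\<alpha> d\<^sub>\<beta> > 0"
      using \<open>d\<^sub>\<alpha> > 0\<close> \<open>d\<^sub>\<beta> > 0\<close> by simp
  qed (rule bound)
qed

lemma Cesaro_mean_tendsto_if_uniformly_close:
  fixes a :: "nat \<Rightarrow> nat \<Rightarrow> real" and b :: "nat \<Rightarrow> real"
  assumes b: "(\<lambda>T. (\<Sum>t\<in>{1..T}. b t) / real T) \<longlonglongrightarrow> \<mu>"
    and close: "\<And>e. e > 0 \<Longrightarrow> eventually (\<lambda>T. \<forall>t. \<bar>a T t - b t\<bar> \<le> e) sequentially"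
  shows "(\<lambda>T. (\<Sum>t\<in>{1..T}. a T t) / real T) \<longlonglongrightarrow> \<mu>"
proof -
  have "(\<lambda>T. (\<Sum>t\<in>{1..T}. a T t) / real T - (\<Sum>t\<in>{1..T}. b t) / real T) \<longlonglongrightarrow> 0"
  proof (rule tendstoI)
    fix e :: real
    assume "e > 0"
    then have "eventually (\<lambda>T. T \<ge> 1 \<and> (\<forall>t. \<bar>a T t - b t\<bar> \<le> e / 2)) sequentially"
      using close[of "e / 2"] by (simp add: eventually_conj_iff eventually_ge_at_top)
    then show "eventually (\<lambda>T. dist ((\<Sum>t\<in>{1..T}. a T t) / real T - (\<Sum>t\<in>{1..T}. b t) / real T) 0 < e)
        sequentially"
    proof (rule eventually_mono)
      fix T :: nat
      assume T: "T \<ge> 1 \<and> (\<forall>t. \<bar>a T t - b t\<bar> \<le> e / 2)"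
      have "\<bar>(\<Sum>t\<in>{1..T}. a T t) / real T - (\<Sum>t\<in>{1..T}. b t) / real T\<bar>
          = \<bar>\<Sum>t\<in>{1..T}. a T t - b t\<bar> / real T"
        by (simp add: sum_subtractf diff_divide_distrib[symmetric])
      also have "\<dots> \<le> (\<Sum>t\<in>{1..T}. e / 2) / real T"
        using T by (intro divide_right_mono order.trans[OF sum_abs sum_mono]) auto
      also have "\<dots> < e"
        using T \<open>e > 0\<close> by simp
      finally show "dist ((\<Sum>t\<in>{1..T}. a T t) / real T - (\<Sum>t\<in>{1..T}. b t) / real T) 0 < e"
        by (simp add: dist_real_def)
    qed
  qed
  from tendsto_add[OF b this] show ?thesis
    by simp
qed

lemma madogram_est_tendsto:
  assumes "finite X" "X \<noteq> {}" "finite Y" "Y \<noteq> {}" "\<alpha> > 0" "\<beta> > 0"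
    and F_range: "\<And>w u. F w u \<in> {0..1}"
    and uniform: "\<forall>w\<in>X \<union> Y. \<forall>e>0.
      eventually (\<lambda>T. \<forall>u. \<bar>emp_cdf Zr T w \<omega> u - F w u\<bar> \<le> e) sequentially"
    and plug_in: "(\<lambda>T. (\<Sum>t\<in>{1..T}. madogram_summand F \<alpha> \<beta> X Y (Zr t \<omega>)) / real T) \<longlonglongrightarrow> \<mu>"
  shows "(\<lambda>T. madogram_est Zr \<alpha> \<beta> X Y T \<omega>) \<longlonglongrightarrow> (1 / 2) * \<mu>"
  unfolding madogram_est_eq_mean
proof (intro tendsto_mult_left Cesaro_mean_tendsto_if_uniformly_close[OF plug_in])
  fix e :: real
  assume "e > 0"
  obtain d where d: "d > 0 \<and> (\<forall>F G z. (\<forall>w\<in>X \<union> Y. F w (z w) \<in> {0..1} \<and> G w (z w) \<in> {0..1}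
      \<and> \<bar>F w (z w) - G w (z w)\<bar> \<le> d)
      \<longrightarrow> \<bar>madogram_summand F \<alpha> \<beta> X Y z - madogram_summand G \<alpha> \<beta> X Y z\<bar> \<le> e)"
    using madogram_summand_uniformly_close[OF assms(1-6) \<open>e > 0\<close>] ..
  have "eventually (\<lambda>T. \<forall>w\<in>X \<union> Y. \<forall>u. \<bar>emp_cdf Zr T w \<omega> u - F w u\<bar> \<le> d) sequentially"
    using assms(1,3) uniform d by (intro eventually_ball_finite) auto
  then show "eventually (\<lambda>T. \<forall>t. \<bar>madogram_summand (\<lambda>w. emp_cdf Zr T w \<omega>) \<alpha> \<beta> X Y (Zr t \<omega>)
      - madogram_summand F \<alpha> \<beta> X Y (Zr t \<omega>)\<bar> \<le> e) sequentially"
  proof (rule eventually_mono, intro allI)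
    fix T t
    assume close: "\<forall>w\<in>X \<union> Y. \<forall>u. \<bar>emp_cdf Zr T w \<omega> u - F w u\<bar> \<le> d"
    show "\<bar>madogram_summand (\<lambda>w. emp_cdf Zr T w \<omega>) \<alpha> \<beta> X Y (Zr t \<omega>)
        - madogram_summand F \<alpha> \<beta> X Y (Zr t \<omega>)\<bar> \<le> e"
      by (rule d[THEN conjunct2, rule_format])
        (simp add: close F_range[unfolded atLeastAtMost_iff]
          emp_cdf_mem_unit_interval[unfolded atLeastAtMost_iff])
  qed
qed

section \<open>Independent replications of a random field\<close>

locale iid_replicated_field = prob_space M
  for M :: "'a measure" and S :: "'l set"
    and Z :: "'a \<Rightarrow> 'l \<Rightarrow> real" and Zr :: "nat \<Rightarrow> 'a \<Rightarrow> 'l \<Rightarrow> real" +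
  assumes Z_measurable [measurable]: "\<And>u. u \<in> S \<Longrightarrow> (\<lambda>\<omega>. Z \<omega> u) \<in> borel_measurable M"
    and Zr_measurable [measurable]: "\<And>t u. u \<in> S \<Longrightarrow> (\<lambda>\<omega>. Zr t \<omega> u) \<in> borel_measurable M"
    and indep_replications:
      "indep_vars (\<lambda>_. PiM S (\<lambda>_. borel)) (\<lambda>t \<omega>. restrict (Zr t \<omega>) S) {1..}"
    and distr_replications: "\<And>t. t \<ge> 1 \<Longrightarrow>
      distr M (PiM S (\<lambda>_. borel)) (\<lambda>\<omega>. restrict (Zr t \<omega>) S)
      = distr M (PiM S (\<lambda>_. borel)) (\<lambda>\<omega>. restrict (Z \<omega>) S)"
begin

lemma strong_law:
  fixes g :: "('l \<Rightarrow> real) \<Rightarrow> real"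
  assumes g_measurable: "g \<in> borel_measurable (PiM S (\<lambda>_. borel))"
    and g_range: "\<And>v. g v \<in> {0..1}"
  shows "AE \<omega> in M. (\<lambda>T. (\<Sum>t\<in>{1..T}. g (restrict (Zr t \<omega>) S)) / real T)
           \<longlonglongrightarrow> expectation (\<lambda>\<omega>. g (restrict (Z \<omega>) S))"
proof (rule strong_law_unit_interval)
  have Zr_restrict: "(\<lambda>\<omega>. restrict (Zr t \<omega>) S) \<in> M \<rightarrow>\<^sub>M PiM S (\<lambda>_. borel)" for t
    by (rule measurable_restrict) simp
  have Z_restrict: "(\<lambda>\<omega>. restrict (Z \<omega>) S) \<in> M \<rightarrow>\<^sub>M PiM S (\<lambda>_. borel)"
    by (rule measurable_restrict) simp
  show "indep_vars (\<lambda>_. borel) (\<lambda>t \<omega>. g (restrict (Zr t \<omega>) S)) {1..}"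
    using indep_vars_compose2[OF indep_replications, of "\<lambda>_. g"] g_measurable by simp
  show "g (restrict (Zr t \<omega>) S) \<in> {0..1}" for t \<omega>
    by (rule g_range)
  show "expectation (\<lambda>\<omega>. g (restrict (Zr t \<omega>) S)) = expectation (\<lambda>\<omega>. g (restrict (Z \<omega>) S))"
    if "t \<ge> 1" for t
    by (metis integral_distr[OF Zr_restrict g_measurable] integral_distr[OF Z_restrict g_measurable]
        distr_replications[OF that])
qed

lemma AE_empirical_frequency_tendsto:
  assumes "w \<in> S" and B [measurable]: "B \<in> sets borel"
  shows "AE \<omega> in M. (\<lambda>T. (\<Sum>t\<in>{1..T}. indicator B (Zr t \<omega> w)) / real T)
           \<longlonglongrightarrow> prob {\<omega> \<in> space M. Z \<omega> w \<in> B}"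
proof -
  have [measurable]: "(\<lambda>v. v w) \<in> borel_measurable (PiM S (\<lambda>_. borel))"
    using measurable_component_singleton[OF \<open>w \<in> S\<close>] .
  have "AE \<omega> in M. (\<lambda>T. (\<Sum>t\<in>{1..T}. indicator B (restrict (Zr t \<omega>) S w)) / real T)
          \<longlonglongrightarrow> expectation (\<lambda>\<omega>. indicator B (restrict (Z \<omega>) S w))"
    by (rule strong_law) (auto simp: indicator_def)
  moreover have "expectation (\<lambda>\<omega>. indicator B (Z \<omega> w)) = prob {\<omega> \<in> space M. Z \<omega> w \<in> B}"
  proof -
    have "expectation (\<lambda>\<omega>. indicator B (Z \<omega> w))
        = expectation (indicator {\<omega> \<in> space M. Z \<omega> w \<in> B})"
      by (rule Bochner_Integration.integral_cong) (auto simp: indicator_def)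
    also have "\<dots> = prob {\<omega> \<in> space M. Z \<omega> w \<in> B}"
      using \<open>w \<in> S\<close> by simp
    finally show ?thesis .
  qed
  ultimately show ?thesis
    using \<open>w \<in> S\<close> by simp
qed

lemma AE_emp_cdf_uniform_tendsto:
  assumes "w \<in> S"
  shows "AE \<omega> in M. \<forall>e>0. eventually
           (\<lambda>T. \<forall>u. \<bar>emp_cdf Zr T w \<omega> u - marg_cdf M Z w u\<bar> \<le> e) sequentially"
proof -
  define N where "N = distr M borel (\<lambda>\<omega>. Z \<omega> w)"
  interpret N: real_distribution N
    using \<open>w \<in> S\<close> unfolding N_def by simp
  have cdf_N: "cdf N c = marg_cdf M Z w c"
    and measure_N: "measure N {..<c} = prob {\<omega> \<in> space M. Z \<omega> w < c}" for c
    using \<open>w \<in> S\<close>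
    by (auto simp: N_def cdf_def marg_cdf_def measure_distr intro!: arg_cong[where f = prob])
  define Gh where "Gh T \<omega> u = (\<Sum>t\<in>{1..T}. indicator {..<u} (Zr t \<omega> w)) / real T" for T \<omega> u
  have "AE \<omega> in M. \<forall>m j.
      (\<lambda>T. emp_cdf Zr T w \<omega> (quantile N (real j / real m))) \<longlonglongrightarrow> cdf N (quantile N (real j / real m))
      \<and> (\<lambda>T. Gh T \<omega> (quantile N (real j / real m))) \<longlonglongrightarrow> measure N {..<quantile N (real j / real m)}"
  proof (subst AE_all_countable, intro allI, subst AE_all_countable, intro allI AE_conjI)
    fix m j :: nat
    show "AE \<omega> in M. (\<lambda>T. emp_cdf Zr T w \<omega> (quantile N (real j / real m)))
        \<longlonglongrightarrow> cdf N (quantile N (real j / real m))"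
      using AE_empirical_frequency_tendsto[OF \<open>w \<in> S\<close>, of "{..quantile N (real j / real m)}"]
      by (simp add: emp_cdf_eq_frequency cdf_N marg_cdf_def)
    show "AE \<omega> in M. (\<lambda>T. Gh T \<omega> (quantile N (real j / real m)))
        \<longlonglongrightarrow> measure N {..<quantile N (real j / real m)}"
      using AE_empirical_frequency_tendsto[OF \<open>w \<in> S\<close>, of "{..<quantile N (real j / real m)}"]
      by (simp add: Gh_def measure_N)
  qed
  then show ?thesis
  proof (rule eventually_mono, intro allI impI)
    fix \<omega> and e :: real
    assume conv: "\<forall>m j.
      (\<lambda>T. emp_cdf Zr T w \<omega> (quantile N (real j / real m))) \<longlonglongrightarrow> cdf N (quantile N (real j / real m))
      \<and> (\<lambda>T. Gh T \<omega> (quantile N (real j / real m))) \<longlonglongrightarrow> measure N {..<quantile N (real j / real m)}"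
      and "e > 0"
    have "eventually (\<lambda>T. \<forall>u. \<bar>emp_cdf Zr T w \<omega> u - cdf N u\<bar> \<le> e) sequentially"
    proof (rule N.uniform_convergence_to_cdf[where Gh = "\<lambda>T. Gh T \<omega>"])
      show "mono (emp_cdf Zr T w \<omega>)" for T
        unfolding emp_cdf_eq_frequency mono_def by (intro allI impI empirical_frequency_mono) auto
      show "emp_cdf Zr T w \<omega> x \<in> {0..1}" for T x
        by (rule emp_cdf_mem_unit_interval)
      show "emp_cdf Zr T w \<omega> x \<le> Gh T \<omega> y" if "x < y" for T x y
        unfolding emp_cdf_eq_frequency Gh_def using that by (intro empirical_frequency_mono) auto
    qed (use conv \<open>e > 0\<close> in auto)
    then show "eventually (\<lambda>T. \<forall>u. \<bar>emp_cdf Zr T w \<omega> u - marg_cdf M Z w u\<bar> \<le> e) sequentially"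
      by (simp add: cdf_N)
  qed
qed

lemma AE_mean_madogram_summand_tendsto:
  assumes "finite X" "X \<noteq> {}" "finite Y" "Y \<noteq> {}" "X \<union> Y \<subseteq> S" "\<alpha> \<ge> 0" "\<beta> \<ge> 0"
    and F_range: "\<And>w u. F w u \<in> {0..1}"
    and F_measurable: "\<And>w. w \<in> X \<union> Y \<Longrightarrow> F w \<in> borel_measurable borel"
  shows "AE \<omega> in M. (\<lambda>T. (\<Sum>t\<in>{1..T}. madogram_summand F \<alpha> \<beta> X Y (Zr t \<omega>)) / real T)
           \<longlonglongrightarrow> expectation (\<lambda>\<omega>. madogram_summand F \<alpha> \<beta> X Y (Z \<omega>))"
proof -
  have "AE \<omega> in M. (\<lambda>T. (\<Sum>t\<in>{1..T}. madogram_summand F \<alpha> \<beta> X Y (restrict (Zr t \<omega>) S)) / real T)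
      \<longlonglongrightarrow> expectation (\<lambda>\<omega>. madogram_summand F \<alpha> \<beta> X Y (restrict (Z \<omega>) S))"
    by (rule strong_law[OF borel_measurable_madogram_summand[OF assms(1,3,5) F_measurable]
          madogram_summand_mem_unit_interval[OF assms(1-4,6,7) F_range]])
  then show ?thesis
    by (simp only: madogram_summand_restrict[OF \<open>X \<union> Y \<subseteq> S\<close>])
qed

end

lemma (in prob_space) marg_cdf_mem_unit_interval: "marg_cdf M Z w u \<in> {0..1}"
  by (simp add: marg_cdf_def)

lemma (in prob_space) borel_measurable_marg_cdf:
  assumes [measurable]: "(\<lambda>\<omega>. Z \<omega> w) \<in> borel_measurable M"
  shows "marg_cdf M Z w \<in> borel_measurable borel"
  by (rule borel_measurable_mono) (auto simp: mono_def marg_cdf_def intro!: finite_measure_mono)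

theorem mainTheorem4:
  fixes M :: "'a measure"
    and Z :: "'a \<Rightarrow> real^2 \<Rightarrow> real"
    and Zr :: "nat \<Rightarrow> 'a \<Rightarrow> real^2 \<Rightarrow> real"
    and X Y :: "(real^2) set"
    and \<alpha> \<beta> :: real
  assumes "prob_space M"
    and "max_stable M Z"
    and "finite X" "X \<noteq> {}" "finite Y" "Y \<noteq> {}" "X \<inter> Y = {}"
    and "\<alpha> > 0" "\<beta> > 0"
    and "\<And>t u. u \<in> X \<union> Y \<Longrightarrow> (\<lambda>\<omega>. Zr t \<omega> u) \<in> borel_measurable M"
    and "prob_space.indep_vars M (\<lambda>_. PiM (X \<union> Y) (\<lambda>_. borel))
           (\<lambda>t \<omega>. restrict (Zr t \<omega>) (X \<union> Y)) {1..}"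
    and "\<And>t. t \<ge> 1 \<Longrightarrow>
           distr M (PiM (X \<union> Y) (\<lambda>_. borel)) (\<lambda>\<omega>. restrict (Zr t \<omega>) (X \<union> Y))
         = distr M (PiM (X \<union> Y) (\<lambda>_. borel)) (\<lambda>\<omega>. restrict (Z \<omega>) (X \<union> Y))"
  shows "AE \<omega> in M. (\<lambda>T. madogram_est Zr \<alpha> \<beta> X Y T \<omega>) \<longlonglongrightarrow>
           (1/2) * prob_space.expectation M (\<lambda>\<omega>.
              \<bar>(MAX i\<in>X. marg_cdf M Z i (Z \<omega> i) powr \<alpha>)
               - (MAX j\<in>Y. marg_cdf M Z j (Z \<omega> j) powr \<beta>)\<bar>)"
proof -
  have Z_measurable: "(\<lambda>\<omega>. Z \<omega> u) \<in> borel_measurable M" for u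
    using assms(2) unfolding max_stable_def by blast
  interpret iid_replicated_field M "X \<union> Y" Z Zr
    by (intro iid_replicated_field.intro iid_replicated_field_axioms.intro assms(1))
      (use assms(10-12) Z_measurable in simp_all)
  have "AE \<omega> in M. \<forall>w\<in>X \<union> Y. \<forall>e>0.
      eventually (\<lambda>T. \<forall>u. \<bar>emp_cdf Zr T w \<omega> u - marg_cdf M Z w u\<bar> \<le> e) sequentially"
    using assms(3,5) by (intro AE_finite_allI AE_emp_cdf_uniform_tendsto) auto
  moreover have "AE \<omega> in M. (\<lambda>T. (\<Sum>t\<in>{1..T}. madogram_summand (marg_cdf M Z) \<alpha> \<beta> X Y (Zr t \<omega>))
      / real T) \<longlonglongrightarrow> expectation (\<lambda>\<omega>. madogram_summand (marg_cdf M Z) \<alpha> \<beta> X Y (Z \<omega>))"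
    by (rule AE_mean_madogram_summand_tendsto[OF assms(3-6) _ _ _ marg_cdf_mem_unit_interval
          borel_measurable_marg_cdf[OF Z_measurable]])
      (use assms(8,9) in auto)
  ultimately have "AE \<omega> in M. (\<lambda>T. madogram_est Zr \<alpha> \<beta> X Y T \<omega>)
      \<longlonglongrightarrow> (1 / 2) * expectation (\<lambda>\<omega>. madogram_summand (marg_cdf M Z) \<alpha> \<beta> X Y (Z \<omega>))"
    by eventually_elim (erule madogram_est_tendsto[OF assms(3-6,8,9) marg_cdf_mem_unit_interval])
  then show ?thesis
    by (simp add: madogram_summand_def)
qed

end
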